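(* In the setting described in the context, suppose $c^{l,n},c^{l,n+1}$ ($l=1,\dots,M$), $\psi^{n+1}$, $T^n,T^{n+1}$ satisfy Scheme I with $c^{l,n}_i,c^{l,n+1}_i,T^n_i,T^{n+1}_i>0$ for all $i,l$. Define the discrete entropy $S^m_h=-\sum_{l=1}^M(c^{l,m},\log c^{l,m})+(\log T^m+1,C_T)$ for $m=n,n+1$. Then \[ \frac{S^{n+1}_h-S^n_h}{\Delta t}\ \ge\ \varepsilon\sum_{l=1}^M\Big(\nu^lc^{l,n+1}|\hat{\mathbf u}^{l,n+1}|^2,\frac{1}{T^{n+1}}\Big)-k\sum_{\sigma\in\mathcal E_{int}}\tau_\sigma\,DT^{n+1}_{i,\sigma}\,D\Big(\frac1{T^{n+1}}\Big)_{i,\sigma}\ \ge 0, \] where in the last sum $\sigma=i|j$ with either orientation (the product is orientation-independent).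
   Context: Mesh. $\Omega\subset\mathbb R^d$ is a bounded polygonal/polyhedral domain with $\partial\Omega=\Gamma_D\cup\Gamma_N$, $\Gamma_D\cap\Gamma_N=\emptyset$. A Voronoi finite-volume mesh consists of points $\mathbf x_1,\dots,\mathbf x_N$ and control volumes $V_i=\{\mathbf y\in\Omega:|\mathbf y-\mathbf x_i|<|\mathbf y-\mathbf x_j|\ \forall j\ne i\}$. An interior face is $\sigma=\partial V_i\cap\partial V_j$ of positive $(d-1)$-measure, written $\sigma=i|j$; $\mathcal E_{int}$ is the set of interior faces and $\mathcal E_{i,int}$ those of $V_i$; $\mathcal E^D_{i,ext}$, $\mathcal E^N_{i,ext}$ are the faces of $\partial V_i$ lying in $\Gamma_D$, resp. $\Gamma_N$. $\mathrm m(\cdot)$ is Lebesgue measure (in dimension $d$ or $d-1$); $d_\sigma=|\mathbf x_i-\mathbf x_j|$ for $\sigma=i|j$ and $d_\sigma=\mathrm{dist}(\mathbf x_i,\sigma)$ for exterior faces of $V_i$; $\tau_\sigma=\mathrm m(\sigma)/d_\sigma$. Grid functions are vectors $u=(u_1,\dots,u_N)\in\mathbb R^N$; for $\sigma=i|j$, $Du_{i,\sigma}=u_j-u_i$. For positive $u$ and $\sigma=i|j$, $\mathcal A_\sigma u=\frac{(\mathrm m(V_i)+\mathrm m(V_j))u_iu_j}{\mathrm m(V_i)u_j+\mathrm m(V_j)u_i}$ (harmonic average). The discrete inner product is $(f,g)=\sum_{i=1}^N\mathrm m(V_i)f_ig_i$; products, quotients and logarithms of grid functions are taken componentwise. Scheme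 I. Parameters: $\varepsilon>0$, $k>0$, $C_T>0$, $\Delta t>0$, $\nu^l>0$, $z^l\in\mathbb R$ ($l=1,\dots,M$), a grid function $\rho^f$, Dirichlet data $\psi^D_\sigma$ on $\Gamma_D$-faces and Neumann data $g_\sigma$ on $\Gamma_N$-faces. Given $c^{l,n}$ (positive), $T^n$, the unknowns $c^{l,n+1}$ (positive), $\psi^{n+1}$, $T^{n+1}$ satisfy, for $i=1,\dots,N$: (i) $\frac{c^{l,n+1}_i-c^{l,n}_i}{\Delta t}+\frac{\varepsilon}{\mathrm m(V_i)}\sum_{\sigma\in\mathcal E_{i,int}}\mathrm m(\sigma)F^l_{i,\sigma}=0$, where for $\sigma=i|j$ \[F^l_{i,\sigma}=-\frac{1}{\nu^l d_\sigma}\Big[\mathcal A_\sigma(c^{l,n})\,D\big(\log c^{l,n+1}+z^l\psi^{n+1}\big)_{i,\sigma}+D\big(c^{l,n}(T^n-1)\big)_{i,\sigma}\Big]\] (so $F^l_{j,\sigma}=-F^l_{i,\sigma}$), and the flux through exterior faces is zero (zero-flux boundary condition); (ii) $-\frac{\varepsilon^2}{\mathrm m(V_i)}\Big[\sum_{\sigma\in\mathcal E_{i,int}}\tau_\sigma D\psi^{n+1}_{i,\sigma}+\sum_{\sigma\in\mathcal E^D_{i,ext}}\tau_\sigma(\psi^D_\sigma-\psi^{n+1}_i)\Big]-\frac{1}{\mathrm m(V_i)}\sum_{\sigma\in\mathcal E^N_{i,ext}}\mathrm m(\sigma)g_\sigma=\sum_{l=1}^Mz^lc^{l,n+1}_i+\rho^f_i$;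 (iii) $C_T\frac{T^{n+1}_i-T^n_i}{\Delta t}=\frac{k}{\mathrm m(V_i)}\sum_{\sigma\in\mathcal E_{i,int}}\tau_\sigma DT^{n+1}_{i,\sigma}+T^{n+1}_iP^{n+1}_i+\varepsilon\sum_{l=1}^M\nu^lc^{l,n+1}_i|\hat{\mathbf u}^{l,n+1}_i|^2$ (thermally insulated boundary: no exterior-face terms), where \[P^{n+1}_i=\sum_{l=1}^M\Big[\frac{\varepsilon}{\mathrm m(V_i)}\sum_{\sigma\in\mathcal E_{i,int}}\mathrm m(\sigma)F^l_{i,\sigma}\lambda^l_\sigma+(1+\log c^{l,n+1}_i)\frac{c^{l,n+1}_i-c^{l,n}_i}{\Delta t}\Big],\] $\lambda^l_\sigma$ is a face value of $\log c^{l,n+1}$ depending only on $\sigma$ (the same from both sides), and $\hat{\mathbf u}^{l,n+1}_i\in\mathbb R^d$ are given cell-wise velocity reconstructions computed from $c^{l,n+1},\psi^{n+1},T^n$; $|\hat{\mathbf u}^{l,n+1}|^2$ denotes the grid function $i\mapsto|\hat{\mathbf u}^{l,n+1}_i|^2$. *)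

theory Defs
  imports "HOL-Analysis.Analysis"
begin

text \<open>An interior face \<sigma> = i|j is represented by the two-element set {i,j} of its
  neighbouring cells; E is the set of interior faces.  mV i = m(V_i),
  mS \<sigma> = m(\<sigma>), dS \<sigma> = d_\<sigma> = |x_i - x_j|.  Exterior faces are elements
  of a type 'e, with the Dirichlet/Neumann exterior faces of V_i given by
  extD i / extN i, measure mE and distance dE.\<close>

definition other :: "'c \<Rightarrow> 'c set \<Rightarrow> 'c" where
  "other i \<sigma> = (THE j. j \<in> \<sigma> \<and> j \<noteq> i)"

text \<open>An (arbitrary) cell of a face, used to orient orientation-independent sums.\<close>
definition rep :: "'c set \<Rightarrow> 'c" where
  "rep \<sigma> = (SOME i. i \<in> \<sigma>)"

definition Dif :: "('c \<Rightarrow> real) \<Rightarrow> 'c \<Rightarrow> 'c set \<Rightarrow> real" where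
  "Dif u i \<sigma> = u (other i \<sigma>) - u i"

definition Eint :: "'c set set \<Rightarrow> 'c \<Rightarrow> 'c set set" where
  "Eint E i = {\<sigma> \<in> E. i \<in> \<sigma>}"

definition tau :: "('c set \<Rightarrow> real) \<Rightarrow> ('c set \<Rightarrow> real) \<Rightarrow> 'c set \<Rightarrow> real" where
  "tau mS dS \<sigma> = mS \<sigma> / dS \<sigma>"

definition harm :: "('c \<Rightarrow> real) \<Rightarrow> ('c \<Rightarrow> real) \<Rightarrow> 'c set \<Rightarrow> real" where
  "harm mV u \<sigma> = (let i = rep \<sigma>; j = other i \<sigma> in
      (mV i + mV j) * u i * u j / (mV i * u j + mV j * u i))"

definition dip :: "('c::finite \<Rightarrow> real) \<Rightarrow> ('c \<Rightarrow> real) \<Rightarrow> ('c \<Rightarrow> real) \<Rightarrow> real" where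
  "dip mV f g = (\<Sum>i\<in>UNIV. mV i * f i * g i)"

definition mesh :: "'c::finite set set \<Rightarrow> ('c \<Rightarrow> real) \<Rightarrow> ('c set \<Rightarrow> real) \<Rightarrow> ('c set \<Rightarrow> real)
    \<Rightarrow> ('c \<Rightarrow> 'e set) \<Rightarrow> ('c \<Rightarrow> 'e set) \<Rightarrow> ('e \<Rightarrow> real) \<Rightarrow> ('e \<Rightarrow> real) \<Rightarrow> bool" where
  "mesh E mV mS dS extD extN mE dE \<longleftrightarrow>
     (\<forall>i. mV i > 0) \<and>
     (\<forall>\<sigma>\<in>E. card \<sigma> = 2 \<and> mS \<sigma> > 0 \<and> dS \<sigma> > 0) \<and>
     (\<forall>i. finite (extD i) \<and> finite (extN i) \<and> extD i \<inter> extN i = {}) \<and>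
     (\<forall>i. \<forall>e \<in> extD i \<union> extN i. mE e > 0 \<and> dE e > 0)"

definition flux :: "('c \<Rightarrow> real) \<Rightarrow> ('c set \<Rightarrow> real) \<Rightarrow> real \<Rightarrow> real
    \<Rightarrow> ('c \<Rightarrow> real) \<Rightarrow> ('c \<Rightarrow> real) \<Rightarrow> ('c \<Rightarrow> real) \<Rightarrow> ('c \<Rightarrow> real) \<Rightarrow> 'c \<Rightarrow> 'c set \<Rightarrow> real" where
  "flux mV dS nu z cn cn1 psi1 Tn i \<sigma> =
     - (1 / (nu * dS \<sigma>)) *
       (harm mV cn \<sigma> * Dif (\<lambda>j. ln (cn1 j) + z * psi1 j) i \<sigma>
        + Dif (\<lambda>j. cn j * (Tn j - 1)) i \<sigma>)"

definition Pterm :: "'c set set \<Rightarrow> ('c \<Rightarrow> real) \<Rightarrow> ('c set \<Rightarrow> real) \<Rightarrow> ('c set \<Rightarrow> real)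
    \<Rightarrow> nat \<Rightarrow> real \<Rightarrow> real \<Rightarrow> (nat \<Rightarrow> real) \<Rightarrow> (nat \<Rightarrow> real)
    \<Rightarrow> (nat \<Rightarrow> 'c \<Rightarrow> real) \<Rightarrow> (nat \<Rightarrow> 'c \<Rightarrow> real) \<Rightarrow> ('c \<Rightarrow> real) \<Rightarrow> ('c \<Rightarrow> real)
    \<Rightarrow> (nat \<Rightarrow> 'c set \<Rightarrow> real) \<Rightarrow> 'c \<Rightarrow> real" where
  "Pterm E mV mS dS M eps dt nu z cn cn1 psi1 Tn lam i =
     (\<Sum>l=1..M. eps / mV i * (\<Sum>\<sigma>\<in>Eint E i. mS \<sigma> * flux mV dS (nu l) (z l) (cn l) (cn1 l) psi1 Tn i \<sigma> * lam l \<sigma>)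
               + (1 + ln (cn1 l i)) * (cn1 l i - cn l i) / dt)"

definition schemeI :: "'c::finite set set \<Rightarrow> ('c \<Rightarrow> real) \<Rightarrow> ('c set \<Rightarrow> real) \<Rightarrow> ('c set \<Rightarrow> real)
    \<Rightarrow> ('c \<Rightarrow> 'e set) \<Rightarrow> ('c \<Rightarrow> 'e set) \<Rightarrow> ('e \<Rightarrow> real) \<Rightarrow> ('e \<Rightarrow> real)
    \<Rightarrow> nat \<Rightarrow> real \<Rightarrow> real \<Rightarrow> real \<Rightarrow> real \<Rightarrow> (nat \<Rightarrow> real) \<Rightarrow> (nat \<Rightarrow> real)
    \<Rightarrow> ('c \<Rightarrow> real) \<Rightarrow> ('e \<Rightarrow> real) \<Rightarrow> ('e \<Rightarrow> real)
    \<Rightarrow> (nat \<Rightarrow> 'c set \<Rightarrow> real) \<Rightarrow> (nat \<Rightarrow> 'c \<Rightarrow> real ^ 'd)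
    \<Rightarrow> (nat \<Rightarrow> 'c \<Rightarrow> real) \<Rightarrow> ('c \<Rightarrow> real) \<Rightarrow> (nat \<Rightarrow> 'c \<Rightarrow> real) \<Rightarrow> ('c \<Rightarrow> real) \<Rightarrow> ('c \<Rightarrow> real) \<Rightarrow> bool" where
  "schemeI E mV mS dS extD extN mE dE M eps k CT dt nu z rhof psiD g lam uhat cn Tn cn1 psi1 Tn1 \<longleftrightarrow>
     (\<forall>l\<in>{1..M}. \<forall>i.
        (cn1 l i - cn l i) / dt
        + eps / mV i * (\<Sum>\<sigma>\<in>Eint E i. mS \<sigma> * flux mV dS (nu l) (z l) (cn l) (cn1 l) psi1 Tn i \<sigma>) = 0) \<and>
     (\<forall>i.
        - (eps\<^sup>2 / mV i) * ((\<Sum>\<sigma>\<in>Eint E i. tau mS dS \<sigma> * Dif psi1 i \<sigma>)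
                            + (\<Sum>e\<in>extD i. mE e / dE e * (psiD e - psi1 i)))
        - (1 / mV i) * (\<Sum>e\<in>extN i. mE e * g e)
        = (\<Sum>l=1..M. z l * cn1 l i) + rhof i) \<and>
     (\<forall>i.
        CT * (Tn1 i - Tn i) / dt
        = k / mV i * (\<Sum>\<sigma>\<in>Eint E i. tau mS dS \<sigma> * Dif Tn1 i \<sigma>)
          + Tn1 i * Pterm E mV mS dS M eps dt nu z cn cn1 psi1 Tn lam i
          + eps * (\<Sum>l=1..M. nu l * cn1 l i * (norm (uhat l i))\<^sup>2))"

definition entropy :: "('c::finite \<Rightarrow> real) \<Rightarrow> nat \<Rightarrow> real \<Rightarrow> (nat \<Rightarrow> 'c \<Rightarrow> real) \<Rightarrow> ('c \<Rightarrow> real) \<Rightarrow> real" where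
  "entropy mV M CT c T = - (\<Sum>l=1..M. dip mV (c l) (\<lambda>i. ln (c l i))) + dip mV (\<lambda>i. ln (T i) + 1) (\<lambda>i. CT)"

end

theory Submission
  imports Defs
begin

text \<open>Divide the discrete heat equation (iii) by \<open>T^{n+1}_i\<close>. The tangent-line inequalities
  for the concave \<open>log\<close> and the convex \<open>c log c\<close> turn the discrete time derivatives of \<open>T\<close> and
  \<open>c^l\<close> into those of the entropy densities, so that the entropy production is bounded below
  cell by cell; the chemical part of \<open>P^{n+1}_i\<close> is absorbed on the way. Summing over the
  cells, the species fluxes cancel face by face, being antisymmetric with a face value
  \<open>\<lambda>\<^sub>\<sigma>\<close> common to both sides, while the heat fluxes give, by summation by parts,
  \<open>-k \<Sum> \<tau>\<^sub>\<sigma> DT D(1/T)\<close>, which is nonnegative because \<open>1/T\<close> decreases in \<open>T\<close>.\<close>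

lemma card_2_other:
  assumes "card \<sigma> = 2" and "i \<in> \<sigma>"
  shows "\<sigma> = {i, other i \<sigma>}" and "other i \<sigma> \<noteq> i"
proof -
  obtain j where \<sigma>: "\<sigma> = {i, j}" and "j \<noteq> i"
    using assms by (metis card_2_iff insert_commute insertE singletonD)
  then have "other i \<sigma> = j"
    unfolding other_def by (intro the_equality) auto
  with \<sigma> \<open>j \<noteq> i\<close> show "\<sigma> = {i, other i \<sigma>}" and "other i \<sigma> \<noteq> i" by auto
qed

lemma other_other:
  assumes "card \<sigma> = 2" and "i \<in> \<sigma>"
  shows "other (other i \<sigma>) \<sigma> = i"
proof -
  have j: "other i \<sigma> \<in> \<sigma>" "other i \<sigma> \<noteq> i"
    using card_2_other[OF assms] by auto
  have "other (other i \<sigma>) \<sigma> \<in> \<sigma>" "other (other i \<sigma>) \<sigma> \<noteq> other i \<sigma>"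
    using card_2_other[OF assms(1) j(1)] by blast+
  with card_2_other(1)[OF assms] show ?thesis by blast
qed

lemma Dif_other:
  assumes "card \<sigma> = 2" and "i \<in> \<sigma>"
  shows "Dif u (other i \<sigma>) \<sigma> = - Dif u i \<sigma>"
  using other_other[OF assms] by (simp add: Dif_def)

lemma sum_face:
  fixes F :: "'c \<Rightarrow> 'a::comm_monoid_add"
  assumes "card \<sigma> = 2" and "i \<in> \<sigma>"
  shows "(\<Sum>j\<in>\<sigma>. F j) = F i + F (other i \<sigma>)"
proof -
  have "(\<Sum>j\<in>{i, other i \<sigma>}. F j) = F i + F (other i \<sigma>)"
    using card_2_other(2)[OF assms] by simp
  then show ?thesis by (metis card_2_other(1)[OF assms])
qed

lemma rep_in_face: "card \<sigma> = 2 \<Longrightarrow> rep \<sigma> \<in> \<sigma>"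
  unfolding rep_def by (rule someI_ex) (metis card_2_iff insertI1)

lemma sum_face_antisym:
  fixes f :: "'c \<Rightarrow> real"
  assumes "card \<sigma> = 2" and "\<And>i. i \<in> \<sigma> \<Longrightarrow> f (other i \<sigma>) = - f i"
  shows "(\<Sum>i\<in>\<sigma>. f i) = 0"
  using sum_face[OF assms(1) rep_in_face[OF assms(1)], of f] assms(2)[OF rep_in_face[OF assms(1)]]
  by simp

lemma sum_face_mult_Dif:
  fixes u T :: "'c \<Rightarrow> real"
  assumes "card \<sigma> = 2" and "i \<in> \<sigma>"
  shows "(\<Sum>j\<in>\<sigma>. u j * (w * Dif T j \<sigma>)) = - (w * Dif T i \<sigma> * Dif u i \<sigma>)"
  unfolding sum_face[OF assms] Dif_other[OF assms] by (simp add: Dif_def algebra_simps)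

lemma flux_other:
  assumes "card \<sigma> = 2" and "i \<in> \<sigma>"
  shows "flux mV dS nu z cn cn1 psi1 Tn (other i \<sigma>) \<sigma> = - flux mV dS nu z cn cn1 psi1 Tn i \<sigma>"
  unfolding flux_def Dif_other[OF assms] by (simp add: algebra_simps)

lemma sum_cells_Eint:
  fixes f :: "'c::finite \<Rightarrow> 'c set \<Rightarrow> real"
  shows "(\<Sum>i\<in>UNIV. \<Sum>\<sigma>\<in>Eint E i. f i \<sigma>) = (\<Sum>\<sigma>\<in>E. \<Sum>i\<in>\<sigma>. f i \<sigma>)"
  unfolding Eint_def using sum.swap_restrict[of UNIV E f "\<lambda>i \<sigma>. i \<in> \<sigma>"] by simp

lemma sum_cells_flux_zero:
  fixes E :: "'c::finite set set"
  assumes "\<And>\<sigma>. \<sigma> \<in> E \<Longrightarrow> card \<sigma> = 2"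
  shows "(\<Sum>i\<in>UNIV. \<Sum>\<sigma>\<in>Eint E i. mS \<sigma> * flux mV dS nu z cn cn1 psi1 Tn i \<sigma> * lam \<sigma>) = 0"
  unfolding sum_cells_Eint
  by (intro sum.neutral ballI sum_face_antisym) (auto simp: assms flux_other)

lemma sum_cells_mult_Dif:
  fixes E :: "'c::finite set set" and u T :: "'c \<Rightarrow> real"
  assumes "\<And>\<sigma>. \<sigma> \<in> E \<Longrightarrow> card \<sigma> = 2"
  shows "(\<Sum>i\<in>UNIV. u i * (\<Sum>\<sigma>\<in>Eint E i. w \<sigma> * Dif T i \<sigma>))
       = - (\<Sum>\<sigma>\<in>E. w \<sigma> * Dif T (rep \<sigma>) \<sigma> * Dif u (rep \<sigma>) \<sigma>)"
  unfolding sum_distrib_left sum_cells_Eint sum_negf[symmetric]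
  by (intro sum.cong refl sum_face_mult_Dif) (auto simp: assms rep_in_face)

lemma diff_mult_diff_inverse_nonpos:
  fixes a b :: real
  assumes "0 < a" and "0 < b"
  shows "(b - a) * (1 / b - 1 / a) \<le> 0"
proof -
  have "(b - a) * (1 / b - 1 / a) = - (b - a)\<^sup>2 / (a * b)"
    using assms by (simp add: field_simps power2_eq_square)
  then show ?thesis using assms by simp
qed

lemma sum_faces_Dif_mult_Dif_inverse_nonpos:
  fixes T :: "'c \<Rightarrow> real"
  assumes "\<And>\<sigma>. \<sigma> \<in> E \<Longrightarrow> 0 \<le> w \<sigma>" and "\<And>i. 0 < T i"
  shows "(\<Sum>\<sigma>\<in>E. w \<sigma> * Dif T (rep \<sigma>) \<sigma> * Dif (\<lambda>i. 1 / T i) (rep \<sigma>) \<sigma>) \<le> 0"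
  unfolding mult.assoc Dif_def
  by (intro sum_nonpos mult_nonneg_nonpos diff_mult_diff_inverse_nonpos) (auto simp: assms)

lemma mult_ln_diff_le:
  fixes x y :: real
  assumes "0 < x" and "0 < y"
  shows "y * ln y - x * ln x \<le> (1 + ln y) * (y - x)"
proof -
  have "ln (y / x) \<le> y / x - 1" using assms by (intro ln_le_minus_one) simp
  then have "x * (ln y - ln x) \<le> y - x"
    using assms by (simp add: ln_div field_simps)
  then show ?thesis by (simp add: algebra_simps)
qed

lemma diff_div_le_ln_diff:
  fixes x y :: real
  assumes "0 < x" and "0 < y"
  shows "(y - x) / y \<le> ln y - ln x"
proof -
  have "ln (x / y) \<le> x / y - 1" using assms by (intro ln_le_minus_one) simp
  then show ?thesis using assms by (simp add: ln_div diff_divide_distrib)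
qed

lemma sum_dip_mult_ln:
  "(\<Sum>l=1..M. dip mV (c l) (\<lambda>i. ln (c l i))) = (\<Sum>i\<in>UNIV. mV i * (\<Sum>l=1..M. c l i * ln (c l i)))"
  unfolding dip_def sum_distrib_left mult.assoc by (rule sum.swap)

lemma entropy_diff:
  "entropy mV M CT c1 T1 - entropy mV M CT c0 T0
   = (\<Sum>i\<in>UNIV. mV i * (CT * (ln (T1 i) - ln (T0 i))
        - (\<Sum>l=1..M. c1 l i * ln (c1 l i) - c0 l i * ln (c0 l i))))"
  unfolding entropy_def sum_dip_mult_ln unfolding dip_def
  by (simp add: sum_subtractf sum.distrib algebra_simps)

lemma entropy_production_cell:
  assumes scheme: "schemeI E mV mS dS extD extN mE dE M eps k CT dt nu z rhof psiD g lam uhat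
      cn Tn cn1 psi1 Tn1"
    and "0 < mV i" and "0 < CT" and "0 < dt" and "0 < Tn i" and "0 < Tn1 i"
    and conc_pos: "\<forall>l\<in>{1..M}. 0 < cn l i \<and> 0 < cn1 l i"
  shows "k * (1 / Tn1 i * (\<Sum>\<sigma>\<in>Eint E i. tau mS dS \<sigma> * Dif Tn1 i \<sigma>))
       + eps * (\<Sum>l=1..M. \<Sum>\<sigma>\<in>Eint E i. mS \<sigma> * flux mV dS (nu l) (z l) (cn l) (cn1 l) psi1 Tn i \<sigma> * lam l \<sigma>)
       + eps * (\<Sum>l=1..M. mV i * (nu l * cn1 l i * (norm (uhat l i))\<^sup>2) * (1 / Tn1 i))
     \<le> mV i * (CT * (ln (Tn1 i) - ln (Tn i))
         - (\<Sum>l=1..M. cn1 l i * ln (cn1 l i) - cn l i * ln (cn l i))) / dt"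
proof -
  define Q where "Q = (\<Sum>\<sigma>\<in>Eint E i. tau mS dS \<sigma> * Dif Tn1 i \<sigma>)"
  define G where "G = (\<Sum>l=1..M. \<Sum>\<sigma>\<in>Eint E i. mS \<sigma> * flux mV dS (nu l) (z l) (cn l) (cn1 l) psi1 Tn i \<sigma> * lam l \<sigma>)"
  define H where "H = (\<Sum>l=1..M. (1 + ln (cn1 l i)) * (cn1 l i - cn l i))"
  define V where "V = (\<Sum>l=1..M. nu l * cn1 l i * (norm (uhat l i))\<^sup>2)"
  define S where "S = (\<Sum>l=1..M. cn1 l i * ln (cn1 l i) - cn l i * ln (cn l i))"
  have "Pterm E mV mS dS M eps dt nu z cn cn1 psi1 Tn lam i = eps / mV i * G + H / dt"
    unfolding Pterm_def G_def H_def by (simp add: sum.distrib sum_distrib_left sum_divide_distrib)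
  with scheme have heat_eq: "CT * (Tn1 i - Tn i) / dt = k / mV i * Q + Tn1 i * (eps / mV i * G + H / dt) + eps * V"
    unfolding schemeI_def Q_def V_def by auto
  have heat: "CT * ((Tn1 i - Tn i) / Tn1 i) = dt * (k / mV i * Q / Tn1 i + eps / mV i * G + eps * V / Tn1 i) + H"
  proof -
    have "CT * ((Tn1 i - Tn i) / Tn1 i) = dt / Tn1 i * (CT * (Tn1 i - Tn i) / dt)"
      using assms(4,6) by simp
    also have "\<dots> = dt * (k / mV i * Q / Tn1 i + eps / mV i * G + eps * V / Tn1 i) + H"
      unfolding heat_eq using assms(4,6) by (simp add: field_simps)
    finally show ?thesis .
  qed
  have "CT * ((Tn1 i - Tn i) / Tn1 i) \<le> CT * (ln (Tn1 i) - ln (Tn i))"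
    using assms(3,5,6) by (intro mult_left_mono diff_div_le_ln_diff) auto
  moreover have "S \<le> H"
    unfolding S_def H_def using conc_pos by (intro sum_mono mult_ln_diff_le) auto
  ultimately have "dt * (k / mV i * Q / Tn1 i + eps / mV i * G + eps * V / Tn1 i)
      \<le> CT * (ln (Tn1 i) - ln (Tn i)) - S"
    using heat by linarith
  then have "k / mV i * Q / Tn1 i + eps / mV i * G + eps * V / Tn1 i
      \<le> (CT * (ln (Tn1 i) - ln (Tn i)) - S) / dt"
    using assms(4) by (simp add: pos_le_divide_eq mult.commute)
  then have cell: "mV i * (k / mV i * Q / Tn1 i + eps / mV i * G + eps * V / Tn1 i)
      \<le> mV i * (CT * (ln (Tn1 i) - ln (Tn i)) - S) / dt"
    unfolding times_divide_eq_right[symmetric] by (rule mult_left_mono) (use assms(2) in simp)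
  have "k * (1 / Tn1 i * Q) + eps * G
      + eps * (\<Sum>l=1..M. mV i * (nu l * cn1 l i * (norm (uhat l i))\<^sup>2) * (1 / Tn1 i))
      = mV i * (k / mV i * Q / Tn1 i + eps / mV i * G + eps * V / Tn1 i)"
    unfolding V_def using assms(2) by (simp add: field_simps sum_distrib_left sum_divide_distrib)
  with cell show ?thesis
    unfolding Q_def G_def S_def by simp
qed

lemma entropy_balance:
  fixes E :: "'c::finite set set"
  assumes "mesh E mV mS dS extD extN mE dE" and "0 < CT" and "0 < dt"
    and "schemeI E mV mS dS extD extN mE dE M eps k CT dt nu z rhof psiD g lam uhat cn Tn cn1 psi1 Tn1"
    and "\<forall>l\<in>{1..M}. \<forall>i. 0 < cn l i \<and> 0 < cn1 l i"
    and "\<forall>i. 0 < Tn i \<and> 0 < Tn1 i"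
  shows "eps * (\<Sum>l=1..M. dip mV (\<lambda>i. nu l * cn1 l i * (norm (uhat l i))\<^sup>2) (\<lambda>i. 1 / Tn1 i))
           - k * (\<Sum>\<sigma>\<in>E. tau mS dS \<sigma> * Dif Tn1 (rep \<sigma>) \<sigma> * Dif (\<lambda>i. 1 / Tn1 i) (rep \<sigma>) \<sigma>)
         \<le> (entropy mV M CT cn1 Tn1 - entropy mV M CT cn Tn) / dt"
proof -
  define R1 where "R1 = eps * (\<Sum>l=1..M. dip mV (\<lambda>i. nu l * cn1 l i * (norm (uhat l i))\<^sup>2) (\<lambda>i. 1 / Tn1 i))"
  define R2 where "R2 = (\<Sum>\<sigma>\<in>E. tau mS dS \<sigma> * Dif Tn1 (rep \<sigma>) \<sigma> * Dif (\<lambda>i. 1 / Tn1 i) (rep \<sigma>) \<sigma>)"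
  have mV_pos: "\<And>i. 0 < mV i" and faces: "\<And>\<sigma>. \<sigma> \<in> E \<Longrightarrow> card \<sigma> = 2"
    using assms(1) by (auto simp: mesh_def)
  have "(\<Sum>i\<in>UNIV. k * (1 / Tn1 i * (\<Sum>\<sigma>\<in>Eint E i. tau mS dS \<sigma> * Dif Tn1 i \<sigma>))) = - k * R2"
    using sum_cells_mult_Dif[of E "\<lambda>i. 1 / Tn1 i" "tau mS dS" Tn1] faces
    unfolding R2_def sum_distrib_left[symmetric] by simp
  moreover have "(\<Sum>i\<in>UNIV. eps * (\<Sum>l=1..M. \<Sum>\<sigma>\<in>Eint E i.
      mS \<sigma> * flux mV dS (nu l) (z l) (cn l) (cn1 l) psi1 Tn i \<sigma> * lam l \<sigma>)) = 0"
    unfolding sum_distrib_left[symmetric] sum.swap[where A = UNIV]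
    using faces by (simp add: sum_cells_flux_zero)
  moreover have "(\<Sum>i\<in>UNIV. eps * (\<Sum>l=1..M. mV i * (nu l * cn1 l i * (norm (uhat l i))\<^sup>2) * (1 / Tn1 i)))
      = R1"
    unfolding R1_def dip_def sum_distrib_left[symmetric] sum.swap[where A = UNIV] ..
  ultimately have "R1 - k * R2
      = (\<Sum>i\<in>UNIV. k * (1 / Tn1 i * (\<Sum>\<sigma>\<in>Eint E i. tau mS dS \<sigma> * Dif Tn1 i \<sigma>))
          + eps * (\<Sum>l=1..M. \<Sum>\<sigma>\<in>Eint E i. mS \<sigma> * flux mV dS (nu l) (z l) (cn l) (cn1 l) psi1 Tn i \<sigma> * lam l \<sigma>)
          + eps * (\<Sum>l=1..M. mV i * (nu l * cn1 l i * (norm (uhat l i))\<^sup>2) * (1 / Tn1 i)))"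
    unfolding sum.distrib by linarith
  also have "\<dots> \<le> (\<Sum>i\<in>UNIV. mV i * (CT * (ln (Tn1 i) - ln (Tn i))
         - (\<Sum>l=1..M. cn1 l i * ln (cn1 l i) - cn l i * ln (cn l i))) / dt)"
    using assms(2-6) mV_pos by (intro sum_mono entropy_production_cell) auto
  also have "\<dots> = (entropy mV M CT cn1 Tn1 - entropy mV M CT cn Tn) / dt"
    unfolding entropy_diff sum_divide_distrib ..
  finally show ?thesis unfolding R1_def R2_def .
qed

theorem theorem3p3:
  fixes E :: "'c::finite set set" and mV :: "'c \<Rightarrow> real"
    and mS dS :: "'c set \<Rightarrow> real"
    and extD extN :: "'c \<Rightarrow> 'e set" and mE dE :: "'e \<Rightarrow> real"
    and M :: nat and eps k CT dt :: real and nu z :: "nat \<Rightarrow> real"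
    and rhof :: "'c \<Rightarrow> real" and psiD g :: "'e \<Rightarrow> real"
    and lam :: "nat \<Rightarrow> 'c set \<Rightarrow> real" and uhat :: "nat \<Rightarrow> 'c \<Rightarrow> real ^ 'd"
    and cn cn1 :: "nat \<Rightarrow> 'c \<Rightarrow> real" and Tn Tn1 psi1 :: "'c \<Rightarrow> real"
  assumes "mesh E mV mS dS extD extN mE dE"
    and "eps > 0" and "k > 0" and "CT > 0" and "dt > 0"
    and "\<forall>l\<in>{1..M}. nu l > 0"
    and "schemeI E mV mS dS extD extN mE dE M eps k CT dt nu z rhof psiD g lam uhat cn Tn cn1 psi1 Tn1"
    and "\<forall>l\<in>{1..M}. \<forall>i. cn l i > 0 \<and> cn1 l i > 0"
    and "\<forall>i. Tn i > 0 \<and> Tn1 i > 0"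
  shows "(entropy mV M CT cn1 Tn1 - entropy mV M CT cn Tn) / dt
           \<ge> eps * (\<Sum>l=1..M. dip mV (\<lambda>i. nu l * cn1 l i * (norm (uhat l i))\<^sup>2) (\<lambda>i. 1 / Tn1 i))
             - k * (\<Sum>\<sigma>\<in>E. tau mS dS \<sigma> * Dif Tn1 (rep \<sigma>) \<sigma> * Dif (\<lambda>i. 1 / Tn1 i) (rep \<sigma>) \<sigma>)
       \<and> eps * (\<Sum>l=1..M. dip mV (\<lambda>i. nu l * cn1 l i * (norm (uhat l i))\<^sup>2) (\<lambda>i. 1 / Tn1 i))
             - k * (\<Sum>\<sigma>\<in>E. tau mS dS \<sigma> * Dif Tn1 (rep \<sigma>) \<sigma> * Dif (\<lambda>i. 1 / Tn1 i) (rep \<sigma>) \<sigma>) \<ge> 0"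
proof -
  have "0 \<le> eps * (\<Sum>l=1..M. dip mV (\<lambda>i. nu l * cn1 l i * (norm (uhat l i))\<^sup>2) (\<lambda>i. 1 / Tn1 i))"
    unfolding dip_def using assms(1,2,6,8,9)
    by (intro mult_nonneg_nonneg sum_nonneg) (auto simp: mesh_def less_imp_le)
  moreover have "k * (\<Sum>\<sigma>\<in>E. tau mS dS \<sigma> * Dif Tn1 (rep \<sigma>) \<sigma> * Dif (\<lambda>i. 1 / Tn1 i) (rep \<sigma>) \<sigma>) \<le> 0"
    using assms(1,3,9)
    by (intro mult_nonneg_nonpos sum_faces_Dif_mult_Dif_inverse_nonpos) (auto simp: mesh_def tau_def)
  ultimately show ?thesis
    using entropy_balance[OF assms(1,4,5,7-9)] by linarith
qed

end
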